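(* Let $G$ be a gap sequence of genus $g$, $\lambda=(\lambda_1,\dots,\lambda_g)$ its associated partition, and $0\le k\le g$. (i) $\partial_{a^{(k)}_1}\cdots\partial_{a^{(k)}_{m_k}}s_\lambda\big(\sum_{i=1}^k[x_i]\big)=c_k\,s_{(\lambda_1,\dots,\lambda_k)}\big(\sum_{i=1}^k[x_i]\big)$. (ii) If $\mu=(\mu_1,\dots,\mu_g)$ is a partition with $\mu_i=\lambda_i$ for $k+1\le i\le g$, then $\partial_{a^{(k)}_1}\cdots\partial_{a^{(k)}_{m_k}}s_\mu\big(\sum_{i=1}^k[x_i]\big)=c_k\,s_{(\mu_1,\dots,\mu_k)}\big(\sum_{i=1}^k[x_i]\big)$ with the same $c_k$.
   Context: For $t=(t_1,t_2,\dots)$ define polynomials $p_m(t)$ by $\exp(\sum_{m\ge1}t_mk^m)=\sum_{m\ge0}p_m(t)k^m$, and $p_m=0$ for $m<0$. For a partition $\mu=(\mu_1\ge\dots\ge\mu_l)$, $s_\mu(t)=\det(p_{\mu_i-i+j}(t))_{1\le i,j\le l}$. $[x]=(x,x^2/2,x^3/3,\dots)$, and $\partial_i=\partial/\partial t_i$. A gap sequence of genus $g\ge1$ is a set $G\subset\mathbb Z_{\ge0}$ with $\#G=g$ whose complement $G^c$ contains $0$ and is closed under addition; write $G=\{w_1<\dots<w_g\}$ and $G^c=\{0=w_1^*<w_2^*<\cdots\}$. Its partition is $\lambda=(w_g,\dots,w_1)-(g-1,\dots,1,0)$. For $0\le k\le g-1$: $m_k=\#\{i:w_i^*<g-k\}$,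 $a^{(k)}_j=w_{g-k-j+1}-w_j^*$ ($1\le j\le m_k$), and $c_k=\pm1$ is the sign of the permutation sending $(w_1^*,\dots,w_{m_k}^*,w_{g-k-m_k},\dots,w_1)$ to $(g-k-1,g-k-2,\dots,1,0)$. Conventions: for $k=0$, $s_{(\lambda_1,\dots,\lambda_k)}(\sum_{i=1}^k[x_i])=1$ (and the left side is evaluated at $t=0$); for $k=g$ the product of derivatives is the identity and $c_g=1$. *)

theory Defs
  imports "HOL-Computational_Algebra.Formal_Power_Series" "HOL-Library.Infinite_Set"
    "HOL-Combinatorics.Permutations" "Jordan_Normal_Form.Determinant" "HOL-Analysis.Derivative"
begin

text \<open>p_m(t): coefficient of k^m in exp(sum_{m>=1} t_m k^m); zero for m < 0.
  Times t are functions nat => real; t 0 is unused.\<close>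
definition pfun :: "int \<Rightarrow> (nat \<Rightarrow> real) \<Rightarrow> real" where
  "pfun m t = (if m < 0 then 0 else
     fps_nth (fps_compose (fps_exp 1) (Abs_fps (\<lambda>n. if n = 0 then 0 else t n))) (nat m))"

definition schur :: "nat list \<Rightarrow> (nat \<Rightarrow> real) \<Rightarrow> real" where
  "schur mu t = Determinant.det (Matrix.mat (length mu) (length mu)
      (\<lambda>(i, j). pfun (int (mu ! i) - int i + int j) t))"

text \<open>sum_{i=1}^k [x_i], i.e. t_m = sum_{i=1}^k x_i^m / m.\<close>
definition bracket_sum :: "nat \<Rightarrow> (nat \<Rightarrow> real) \<Rightarrow> (nat \<Rightarrow> real)" where
  "bracket_sum k x = (\<lambda>m. \<Sum>i = 1..k. x i ^ m / real m)"

definition pderiv_t :: "nat \<Rightarrow> ((nat \<Rightarrow> real) \<Rightarrow> real) \<Rightarrow> (nat \<Rightarrow> real) \<Rightarrow> real" where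
  "pderiv_t i F t = deriv (\<lambda>s. F (t(i := s))) (t i)"

definition pderivs :: "nat list \<Rightarrow> ((nat \<Rightarrow> real) \<Rightarrow> real) \<Rightarrow> (nat \<Rightarrow> real) \<Rightarrow> real" where
  "pderivs as F = foldr pderiv_t as F"

definition is_gap_sequence :: "nat set \<Rightarrow> nat \<Rightarrow> bool" where
  "is_gap_sequence G g \<longleftrightarrow> g \<ge> 1 \<and> finite G \<and> card G = g \<and> 0 \<notin> G \<and>
     (\<forall>a b. a \<notin> G \<longrightarrow> b \<notin> G \<longrightarrow> a + b \<notin> G)"

text \<open>w_i (1-indexed, increasing)\<close>
definition gap :: "nat set \<Rightarrow> nat \<Rightarrow> nat" where
  "gap G i = sorted_list_of_set G ! (i - 1)"

text \<open>w*_j (1-indexed, increasing), w*_1 = 0\<close>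
definition nongap :: "nat set \<Rightarrow> nat \<Rightarrow> nat" where
  "nongap G j = enumerate (- G) (j - 1)"

text \<open>lambda = (w_g,...,w_1) - (g-1,...,0)\<close>
definition gap_partition :: "nat set \<Rightarrow> nat \<Rightarrow> nat list" where
  "gap_partition G g = map (\<lambda>i. gap G (g - i) - (g - 1 - i)) [0..<g]"

definition m_k :: "nat set \<Rightarrow> nat \<Rightarrow> nat \<Rightarrow> nat" where
  "m_k G g k = card {i. 1 \<le> i \<and> nongap G i < g - k}"

definition a_seq :: "nat set \<Rightarrow> nat \<Rightarrow> nat \<Rightarrow> nat list" where
  "a_seq G g k = map (\<lambda>j. gap G (g - k - j + 1) - nongap G j) [1..<m_k G g k + 1]"

definition c_seq :: "nat set \<Rightarrow> nat \<Rightarrow> nat \<Rightarrow> nat list" where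
  "c_seq G g k = map (nongap G) [1..<m_k G g k + 1] @ map (gap G) (rev [1..<g - k - m_k G g k + 1])"

text \<open>sign of the permutation sending c_seq to (g-k-1,...,1,0): position i goes to the
  position of its entry in the target list\<close>
definition c_sign :: "nat set \<Rightarrow> nat \<Rightarrow> nat \<Rightarrow> int" where
  "c_sign G g k = sign (\<lambda>i. if i < g - k then g - k - 1 - c_seq G g k ! i else i)"

end

theory Submission
  imports Defs
begin

text \<open>Since \<open>\<partial>p\<^sub>m/\<partial>t\<^sub>a = p\<^sub>m\<^sub>-\<^sub>a\<close>, the derivative \<open>\<partial>\<^sub>a\<close> of a determinant \<open>det(p\<^bsub>R i + j\<^esub>)\<close> is the
  sum, over the rows \<open>r\<close>, of the determinants with \<open>R r\<close> lowered by \<open>a\<close>; so \<open>\<partial>\<^sub>a\<^sub>1\<cdots>\<partial>\<^sub>a\<^sub>m s\<^sub>\<mu>\<close>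
  is a sum over all lists of rows to lower. At \<open>t = \<Sum>\<^sub>i\<^sub>\<le>\<^sub>k [x\<^sub>i]\<close> the generating series of the
  \<open>p\<^sub>m\<close> is \<open>\<Prod>\<^sub>i (1 - x\<^sub>i z)\<inverse>\<close>, so a term vanishes unless its rows are distinct and every column
  \<open>j \<ge> k\<close> contains an entry \<open>p\<^sub>0 = 1\<close>. For \<open>\<mu>\<close> agreeing with \<open>\<lambda>\<close> beyond \<open>k\<close> the rows
  \<open>k, k+1, \<dots>\<close> are indexed by the gaps \<open>w\<^sub>g\<^sub>-\<^sub>k, w\<^sub>g\<^sub>-\<^sub>k\<^sub>-\<^sub>1, \<dots>\<close>, and a counting argument shows that
  only lowering rows \<open>k, \<dots>, k + m\<^sub>k - 1\<close> by \<open>a\<^sub>1, \<dots>, a\<^sub>m\<^sub>k\<close> survives: it moves the gaps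
  \<open>\<ge> g - k\<close> onto the non-gaps \<open>< g - k\<close>. The surviving matrix is a row permutation, of sign \<open>c\<^sub>k\<close>, of a
  block triangular matrix whose lower right block is unitriangular.\<close>

section \<open>The polynomials \<open>p\<^sub>m\<close> and their derivatives\<close>

definition time_fps :: "(nat \<Rightarrow> real) \<Rightarrow> real fps" where
  "time_fps t = Abs_fps (\<lambda>n. if n = 0 then 0 else t n)"

definition p_fps :: "(nat \<Rightarrow> real) \<Rightarrow> real fps" where
  "p_fps t = fps_compose (fps_exp 1) (time_fps t)"

lemma pfun_conv_p_fps: "pfun m t = (if m < 0 then 0 else fps_nth (p_fps t) (nat m))"
  unfolding pfun_def p_fps_def time_fps_def by simp

lemma pfun_neg [simp]: "m < 0 \<Longrightarrow> pfun m t = 0"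
  by (simp add: pfun_conv_p_fps)

lemma pfun_of_nat: "pfun (int n) t = fps_nth (p_fps t) n"
  by (simp add: pfun_conv_p_fps)

lemma pfun_0 [simp]: "pfun 0 t = 1"
  by (simp add: pfun_conv_p_fps p_fps_def time_fps_def fps_compose_nth_0)

lemma fps_deriv_p_fps: "fps_deriv (p_fps t) = p_fps t * fps_deriv (time_fps t)"
proof -
  have "fps_nth (time_fps t) 0 = 0" by (simp add: time_fps_def)
  then show ?thesis unfolding p_fps_def
    by (simp add: fps_compose_deriv fps_const_mult_apply_left[symmetric])
qed

lemma pfun_recurrence_Suc:
  "real (Suc n) * pfun (int (Suc n)) t = (\<Sum>j = 1..Suc n. real j * t j * pfun (int (Suc n) - int j) t)"
proof -
  have "real (Suc n) * pfun (int (Suc n)) t = fps_nth (fps_deriv (p_fps t)) n"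
    by (simp add: pfun_of_nat fps_deriv_nth del: of_nat_Suc)
  also have "\<dots> = (\<Sum>i = 0..n. fps_nth (p_fps t) i * (real (Suc (n - i)) * t (Suc (n - i))))"
    unfolding fps_deriv_p_fps fps_mult_nth by (simp add: fps_deriv_nth time_fps_def)
  also have "\<dots> = (\<Sum>j = 1..Suc n. real j * t j * pfun (int (Suc n) - int j) t)"
  proof (rule sum.reindex_bij_witness[where i = "\<lambda>j. Suc n - j" and j = "\<lambda>i. Suc n - i"])
    fix i assume i: "i \<in> {0..n}"
    then have "int (Suc n) - int (Suc n - i) = int i" by auto
    with i show "real (Suc n - i) * t (Suc n - i) * pfun (int (Suc n) - int (Suc n - i)) t
        = fps_nth (p_fps t) i * (real (Suc (n - i)) * t (Suc (n - i)))"
      by (simp add: pfun_of_nat Suc_diff_le)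
  qed auto
  finally show ?thesis .
qed

lemma pfun_recurrence:
  assumes "M \<le> int N"
  shows "(\<Sum>j = 1..N. real j * t j * pfun (M - int j) t) = of_int M * pfun M t"
proof (cases "M \<le> 0")
  case True
  then have "(\<Sum>j = 1..N. real j * t j * pfun (M - int j) t) = 0"
    by (intro sum.neutral) auto
  moreover have "of_int M * pfun M t = 0" using True by (cases "M = 0") auto
  ultimately show ?thesis by simp
next
  case False
  then obtain n where n: "M = int (Suc n)"
    by (metis gr0_implies_Suc linorder_not_le of_nat_0_less_iff pos_int_cases)
  with assms have "(\<Sum>j = 1..N. real j * t j * pfun (M - int j) t)
      = (\<Sum>j = 1..Suc n. real j * t j * pfun (M - int j) t)"
    by (intro sum.mono_neutral_right) auto
  then show ?thesis using pfun_recurrence_Suc[of n t] n by simp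
qed

text \<open>The \<open>t\<^sub>a\<close>-derivative of the right-hand side of \<open>pfun_recurrence\<close>, given that
  \<open>\<partial>\<^sub>a p\<^sub>n = p\<^sub>n\<^sub>-\<^sub>a\<close> for \<open>n < M\<close>.\<close>

lemma pfun_recurrence_deriv:
  assumes "M \<le> int N"
  shows "(\<Sum>j = 1..N. real j * ((if j = a then 1 else 0) * pfun (M - int j) t
            + t j * pfun (M - int j - int a) t)) = of_int M * pfun (M - int a) t"
proof -
  have "(\<Sum>j = 1..N. real j * (if j = a then 1 else 0) * pfun (M - int j) t)
      = (\<Sum>j \<in> {1..N}. if j = a then real a * pfun (M - int a) t else 0)"
    by (intro sum.cong) auto
  also have "\<dots> = (if a \<in> {1..N} then real a * pfun (M - int a) t else 0)"
    by simp
  also have "\<dots> = real a * pfun (M - int a) t"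
    using assms by auto
  finally have first: "(\<Sum>j = 1..N. real j * (if j = a then 1 else 0) * pfun (M - int j) t)
      = real a * pfun (M - int a) t" .
  have second: "(\<Sum>j = 1..N. real j * t j * pfun ((M - int a) - int j) t)
      = of_int (M - int a) * pfun (M - int a) t"
    using assms by (intro pfun_recurrence) simp
  show ?thesis
    using first second by (simp add: sum.distrib algebra_simps)
qed

lemma has_real_derivative_fun_upd:
  "((\<lambda>s. (t(a := s)) j) has_real_derivative (if j = a then 1 else 0)) (at s)"
  by (cases "j = a") (auto intro!: derivative_eq_intros)

lemma has_real_derivative_pfun:
  assumes "1 \<le> a"
  shows "((\<lambda>s. pfun m (t(a := s))) has_real_derivative pfun (m - int a) (t(a := s))) (at s)"
proof (induction "nat m" arbitrary: m rule: less_induct)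
  case less
  show ?case
  proof (cases "m \<le> 0")
    case True
    then have "(\<lambda>s. pfun m (t(a := s))) = (\<lambda>s. if m = 0 then 1 else 0)"
      by auto
    moreover have "m - int a < 0" using True assms by simp
    ultimately show ?thesis by simp
  next
    case False
    define T where "T = (\<lambda>s. t(a := s))"
    define N where "N = nat m"
    have m: "m = int N" "0 < N" using False by (auto simp: N_def)
    have IH: "((\<lambda>s. pfun (m - int j) (T s)) has_real_derivative pfun (m - int j - int a) (T s)) (at s)"
      if "j \<in> {1..N}" for j
      using less that m unfolding T_def by (intro less) auto
    have "((\<lambda>s. T s j * pfun (m - int j) (T s)) has_real_derivative
        (if j = a then 1 else 0) * pfun (m - int j) (T s) + T s j * pfun (m - int j - int a) (T s)) (at s)"
      if "j \<in> {1..N}" for j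
      using DERIV_mult'[OF has_real_derivative_fun_upd[of t a j s] IH[OF that, unfolded T_def]]
      by (simp only: T_def add.commute)
    then have "((\<lambda>s. \<Sum>j = 1..N. real j * (T s j * pfun (m - int j) (T s))) has_real_derivative
        (\<Sum>j = 1..N. real j * ((if j = a then 1 else 0) * pfun (m - int j) (T s)
          + T s j * pfun (m - int j - int a) (T s)))) (at s)"
      by (intro DERIV_sum DERIV_cmult)
    also have "(\<Sum>j = 1..N. real j * ((if j = a then 1 else 0) * pfun (m - int j) (T s)
          + T s j * pfun (m - int j - int a) (T s))) = real N * pfun (m - int a) (T s)"
      using pfun_recurrence_deriv[of m N] m by simp
    finally have "((\<lambda>s. (\<Sum>j = 1..N. real j * (T s j * pfun (m - int j) (T s))) / real N)
        has_real_derivative real N * pfun (m - int a) (T s) / real N) (at s)"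
      by (rule DERIV_cdivide)
    then have "((\<lambda>s. (\<Sum>j = 1..N. real j * T s j * pfun (m - int j) (T s)) / real N)
        has_real_derivative pfun (m - int a) (T s)) (at s)"
      using m by (simp add: mult.assoc)
    moreover have "(\<Sum>j = 1..N. real j * T s' j * pfun (m - int j) (T s')) / real N = pfun m (T s')"
      for s'
      using pfun_recurrence[of m N "T s'"] m by simp
    ultimately show ?thesis by (simp add: T_def)
  qed
qed

section \<open>Determinants in the \<open>p\<^sub>m\<close>\<close>

definition pmat :: "nat \<Rightarrow> (nat \<Rightarrow> int) \<Rightarrow> (nat \<Rightarrow> real) \<Rightarrow> real mat" where
  "pmat g R t = Matrix.mat g g (\<lambda>(i, j). pfun (R i + int j) t)"

definition pdet :: "nat \<Rightarrow> (nat \<Rightarrow> int) \<Rightarrow> (nat \<Rightarrow> real) \<Rightarrow> real" where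
  "pdet g R t = Determinant.det (pmat g R t)"

lemma pmat_carrier [simp]: "pmat g R t \<in> carrier_mat g g"
  by (simp add: pmat_def)

lemma pmat_dims [simp]: "dim_row (pmat g R t) = g" "dim_col (pmat g R t) = g"
  by (simp_all add: pmat_def)

lemma pmat_index [simp]: "i < g \<Longrightarrow> j < g \<Longrightarrow> pmat g R t $$ (i, j) = pfun (R i + int j) t"
  by (simp add: pmat_def)

lemma schur_eq_pdet: "length mu = g \<Longrightarrow> schur mu = pdet g (\<lambda>i. int (mu ! i) - int i)"
  by (auto simp: schur_def pdet_def pmat_def fun_eq_iff algebra_simps)

lemma pdet_expand:
  "pdet g R t = (\<Sum>p | p permutes {0..<g}. of_int (sign p) * (\<Prod>i = 0..<g. pfun (R i + int (p i)) t))"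
  unfolding pdet_def by (simp add: det_def'[OF pmat_carrier])

lemma pdet_cong: "(\<And>i. i < g \<Longrightarrow> R i = R' i) \<Longrightarrow> pdet g R t = pdet g R' t"
  unfolding pdet_expand by (intro sum.cong prod.cong refl) auto

lemma pdet_lower_row_expand:
  assumes "r < g"
  shows "pdet g (R(r := R r - c)) t = (\<Sum>p | p permutes {0..<g}. of_int (sign p) *
           (pfun (R r + int (p r) - c) t * (\<Prod>i \<in> {0..<g} - {r}. pfun (R i + int (p i)) t)))"
  unfolding pdet_expand
proof (intro sum.cong refl arg_cong2[where f = "(*)"])
  fix p
  have "(\<Prod>i = 0..<g. pfun ((R(r := R r - c)) i + int (p i)) t)
      = pfun (R r - c + int (p r)) t * (\<Prod>i \<in> {0..<g} - {r}. pfun ((R(r := R r - c)) i + int (p i)) t)"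
    using assms by (subst prod.remove[of _ r]) auto
  also have "(\<Prod>i \<in> {0..<g} - {r}. pfun ((R(r := R r - c)) i + int (p i)) t)
      = (\<Prod>i \<in> {0..<g} - {r}. pfun (R i + int (p i)) t)"
    by (intro prod.cong) auto
  finally show "(\<Prod>i = 0..<g. pfun ((R(r := R r - c)) i + int (p i)) t)
      = pfun (R r + int (p r) - c) t * (\<Prod>i \<in> {0..<g} - {r}. pfun (R i + int (p i)) t)"
    by (simp add: algebra_simps)
qed

lemma has_real_derivative_pdet:
  assumes "1 \<le> a"
  shows "((\<lambda>s. pdet g R (t(a := s))) has_real_derivative
           (\<Sum>r<g. pdet g (R(r := R r - int a)) (t(a := s)))) (at s)"
proof -
  let ?T = "t(a := s)"
  have "((\<lambda>s. pdet g R (t(a := s))) has_real_derivative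
      (\<Sum>p | p permutes {0..<g}. of_int (sign p) * (\<Sum>r \<in> {0..<g}.
         pfun (R r + int (p r) - int a) ?T * (\<Prod>i \<in> {0..<g} - {r}. pfun (R i + int (p i)) ?T)))) (at s)"
    unfolding pdet_expand
    by (intro DERIV_sum DERIV_cmult has_field_derivative_prod[where f = "\<lambda>i s. pfun (R i + _ i) (t(a := s))", simplified]
        has_real_derivative_pfun[OF assms])
  moreover have "(\<Sum>p | p permutes {0..<g}. of_int (sign p) * (\<Sum>r \<in> {0..<g}.
         pfun (R r + int (p r) - int a) ?T * (\<Prod>i \<in> {0..<g} - {r}. pfun (R i + int (p i)) ?T)))
      = (\<Sum>r<g. pdet g (R(r := R r - int a)) ?T)"
    by (simp add: pdet_lower_row_expand sum_distrib_left atLeast0LessThan[symmetric]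
        sum.swap[where A = "{p. p permutes {0..<g}}"])
  ultimately show ?thesis
    by simp
qed

lemma pdet_identical_rows:
  assumes "i < g" "i' < g" "i \<noteq> i'" "R i = R i'"
  shows "pdet g R t = 0"
  unfolding pdet_def
proof (rule det_identical_rows[OF pmat_carrier assms(3,1,2)])
  show "Matrix.row (pmat g R t) i = Matrix.row (pmat g R t) i'"
    by (rule eq_vecI) (use assms in auto)
qed

lemma inj_on_rows_if_pdet_nonzero:
  assumes "pdet g R t \<noteq> 0"
  shows "inj_on R {0..<g}"
proof (rule inj_onI, rule ccontr)
  fix i i' assume "i \<in> {0..<g}" "i' \<in> {0..<g}" "R i = R i'" "i \<noteq> i'"
  with assms show False
    using pdet_identical_rows[of i g i' R t] by auto
qed

lemma pdet_permute_rows: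
  assumes "\<pi> permutes {0..<g}"
  shows "pdet g (R \<circ> \<pi>) t = of_int (sign \<pi>) * pdet g R t"
proof -
  have "pmat g (R \<circ> \<pi>) t = Matrix.mat g g (\<lambda>(i, j). pmat g R t $$ (\<pi> i, j))"
    using permutes_in_image[OF assms] by (intro eq_matI) auto
  then show ?thesis
    using det_permute_rows[OF pmat_carrier assms] by (simp add: pdet_def)
qed

lemma pdet_block_triangular:
  assumes "k \<le> g"
  shows "pdet g (\<lambda>i. if i < k then R i else - int i) t = pdet k R t"
proof -
  define A2 where "A2 = Matrix.mat k (g - k) (\<lambda>(i, j). pfun (R i + int (j + k)) t)"
  define A4 where "A4 = Matrix.mat (g - k) (g - k) (\<lambda>(i, j). pfun (int j - int i) t)"
  have A4: "A4 \<in> carrier_mat (g - k) (g - k)"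
    by (simp add: A4_def)
  have blocks: "pmat g (\<lambda>i. if i < k then R i else - int i) t
      = four_block_mat (pmat k R t) A2 (0\<^sub>m (g - k) k) A4"
    using assms by (intro eq_matI) (auto simp: A2_def A4_def algebra_simps)
  have "Determinant.det A4 = prod_list (diag_mat A4)"
    by (rule det_upper_triangular[OF _ A4]) (auto simp: upper_triangular_def A4_def)
  also have "diag_mat A4 = map (\<lambda>i. 1) [0..<g - k]"
    unfolding diag_mat_def by (intro map_cong) (auto simp: A4_def)
  finally have "Determinant.det A4 = 1"
    by (simp add: map_replicate_const)
  then show ?thesis
    unfolding pdet_def blocks
    by (subst det_four_block_mat_lower_left_zero[OF pmat_carrier _ refl A4]) (auto simp: A2_def)
qed

lemma permutes_shift:
  fixes \<sigma> :: "nat \<Rightarrow> nat"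
  assumes "\<sigma> permutes {0..<n}"
  obtains \<pi> where "\<pi> permutes {k..<k + n}" and "sign \<pi> = sign \<sigma>"
    and "\<And>i. i < n \<Longrightarrow> \<pi> (k + i) = k + \<sigma> i"
proof
  have inj: "inj_on ((+) k) {0..<n}"
    by (simp add: inj_on_def)
  have "bij_betw ((+) k) {0..<n} {k..<k + n}"
    by (simp add: bij_betw_def image_add_atLeastLessThan add.commute)
  then show "map_permutation {0..<n} ((+) k) \<sigma> permutes {k..<k + n}"
    using assms by (rule map_permutation_permutes)
  show "sign (map_permutation {0..<n} ((+) k) \<sigma>) = sign \<sigma>"
    using inj assms by (rule sign_map_permutation) simp
  show "map_permutation {0..<n} ((+) k) \<sigma> (k + i) = k + \<sigma> i" if "i < n" for i
    using map_permutation_apply[OF inj] that by simp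
qed

lemma pdet_permuted_tail:
  assumes "k \<le> g" and \<sigma>: "\<sigma> permutes {0..<g - k}"
    and R': "\<forall>i<g. R' i = (if i < k then R i else - int (k + \<sigma> (i - k)))"
  shows "pdet g R' t = of_int (sign \<sigma>) * pdet k R t"
proof -
  define R0 where "R0 = (\<lambda>i. if i < k then R i else - int i)"
  obtain \<pi> where \<pi>: "\<pi> permutes {k..<k + (g - k)}" "sign \<pi> = sign \<sigma>"
    and \<pi>_shift: "\<And>i. i < g - k \<Longrightarrow> \<pi> (k + i) = k + \<sigma> i"
    using permutes_shift[OF \<sigma>, of k] by blast
  have \<pi>_perm: "\<pi> permutes {0..<g}"
    using \<pi>(1) assms(1) by (auto intro: permutes_subset)
  have "R' i = (R0 \<circ> \<pi>) i" if "i < g" for i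
  proof (cases "i < k")
    case True
    then have "\<pi> i = i"
      using \<pi>(1) by (intro permutes_not_in) auto
    with True that R' show ?thesis by (simp add: R0_def)
  next
    case False
    then have "\<pi> i = k + \<sigma> (i - k)"
      using \<pi>_shift[of "i - k"] that by simp
    with False that R' show ?thesis by (simp add: R0_def)
  qed
  then have "pdet g R' t = pdet g (R0 \<circ> \<pi>) t"
    by (rule pdet_cong)
  also have "\<dots> = of_int (sign \<sigma>) * pdet g R0 t"
    using pdet_permute_rows[OF \<pi>_perm] \<pi>(2) by simp
  also have "pdet g R0 t = pdet k R t"
    unfolding R0_def using assms(1) by (rule pdet_block_triangular)
  finally show ?thesis .
qed

fun lower_rows :: "(nat \<Rightarrow> int) \<Rightarrow> nat list \<Rightarrow> nat list \<Rightarrow> nat \<Rightarrow> int" where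
  "lower_rows R (a # as) (r # rs) = lower_rows (R(r := R r - int a)) as rs"
| "lower_rows R _ _ = R"

lemma lower_rows_lower_row:
  "lower_rows (R(r := R r - c)) as rs = (lower_rows R as rs)(r := lower_rows R as rs r - c)"
proof (induction R as rs arbitrary: c rule: lower_rows.induct)
  case (1 R a as r' rs)
  have "(R(r := R r - c))(r' := (R(r := R r - c)) r' - int a)
      = (R(r' := R r' - int a))(r := (R(r' := R r' - int a)) r - c)"
    by (auto simp: fun_eq_iff)
  then show ?case
    by (simp only: lower_rows.simps "1.IH")
qed auto

lemma lower_rows_notin: "i \<notin> set rs \<Longrightarrow> lower_rows R as rs i = R i"
  by (induction R as rs rule: lower_rows.induct) auto

lemma lower_rows_nth:
  assumes "distinct rs" "length rs = length as" "l < length as"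
  shows "lower_rows R as rs (rs ! l) = R (rs ! l) - int (as ! l)"
  using assms
proof (induction R as rs arbitrary: l rule: lower_rows.induct)
  case (1 R a as r rs)
  show ?case
  proof (cases l)
    case 0
    with 1 show ?thesis by (simp add: lower_rows_notin)
  next
    case (Suc l')
    with "1.prems" have "rs ! l' \<noteq> r" by (auto simp: nth_mem)
    with "1.IH"[of l'] "1.prems" Suc show ?thesis by (simp add: fun_upd_def)
  qed
qed auto

lemma lower_rows_add_const: "lower_rows (\<lambda>i. R i + c) as rs = (\<lambda>i. lower_rows R as rs i + c)"
proof (induction R as rs rule: lower_rows.induct)
  case (1 R a as r rs)
  have "(\<lambda>i. R i + c)(r := R r + c - int a) = (\<lambda>i. (R(r := R r - int a)) i + c)"
    by auto
  then show ?case
    by (simp only: lower_rows.simps "1.IH")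
qed auto

definition row_lists :: "nat \<Rightarrow> nat \<Rightarrow> nat list set" where
  "row_lists m g = {rs. set rs \<subseteq> {0..<g} \<and> length rs = m}"

lemma finite_row_lists [simp]: "finite (row_lists m g)"
  unfolding row_lists_def by (rule finite_lists_length_eq) simp

lemma row_lists_0 [simp]: "row_lists 0 g = {[]}"
  by (auto simp: row_lists_def)

lemma sum_row_lists_Suc:
  "(\<Sum>rs \<in> row_lists (Suc m) g. f rs) = (\<Sum>r<g. \<Sum>rs \<in> row_lists m g. f (r # rs))"
proof -
  have "(\<Sum>rs \<in> row_lists (Suc m) g. f rs) = (\<Sum>(rs, r) \<in> row_lists m g \<times> {0..<g}. f (r # rs))"
    unfolding row_lists_def lists_length_Suc_eq
    by (subst sum.reindex) (auto simp: inj_on_def case_prod_unfold)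
  also have "\<dots> = (\<Sum>rs \<in> row_lists m g. \<Sum>r<g. f (r # rs))"
    by (simp add: sum.cartesian_product atLeast0LessThan)
  finally show ?thesis
    by (simp add: sum.swap[where A = "row_lists m g"])
qed

theorem pderivs_pdet:
  assumes "\<forall>a \<in> set as. 1 \<le> a"
  shows "pderivs as (pdet g R) t = (\<Sum>rs \<in> row_lists (length as) g. pdet g (lower_rows R as rs) t)"
  using assms
proof (induction as arbitrary: t)
  case Nil
  show ?case by (simp add: pderivs_def)
next
  case (Cons a as)
  have IH: "pderivs as (pdet g R) = (\<lambda>t. \<Sum>rs \<in> row_lists (length as) g. pdet g (lower_rows R as rs) t)"
    using Cons by auto
  have "((\<lambda>s. pderivs as (pdet g R) (t(a := s))) has_real_derivative
      (\<Sum>rs \<in> row_lists (length as) g. \<Sum>r<g. pdet g ((lower_rows R as rs)(r := lower_rows R as rs r - int a)) t))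
      (at (t a))"
    unfolding IH using Cons.prems has_real_derivative_pdet[of a g _ t "t a"]
    by (intro DERIV_sum) simp
  then have "pderivs (a # as) (pdet g R) t
      = (\<Sum>rs \<in> row_lists (length as) g. \<Sum>r<g. pdet g (lower_rows R (a # as) (r # rs)) t)"
    by (simp add: pderivs_def pderiv_t_def DERIV_imp_deriv lower_rows_lower_row)
  also have "\<dots> = (\<Sum>rs \<in> row_lists (length (a # as)) g. pdet g (lower_rows R (a # as) rs) t)"
    by (simp add: sum_row_lists_Suc sum.swap[where B = "{..<g}"])
  finally show ?case .
qed

section \<open>Specialisation to \<open>t = \<Sum>\<^sub>i\<^sub>\<le>\<^sub>k [x\<^sub>i]\<close>\<close>

definition log_fps :: "real \<Rightarrow> real fps" where
  "log_fps y = Abs_fps (\<lambda>n. if n = 0 then 0 else y ^ n / real n)"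

definition q_fps :: "nat \<Rightarrow> (nat \<Rightarrow> real) \<Rightarrow> real fps" where
  "q_fps k x = (\<Prod>i = 1..k. 1 - fps_const (x i) * fps_X)"

lemma time_fps_bracket_sum_0: "time_fps (bracket_sum 0 x) = 0"
  by (rule fps_ext) (simp add: time_fps_def bracket_sum_def)

lemma time_fps_bracket_sum_Suc:
  "time_fps (bracket_sum (Suc k) x) = time_fps (bracket_sum k x) + log_fps (x (Suc k))"
  by (rule fps_ext) (simp add: time_fps_def log_fps_def bracket_sum_def)

lemma fps_deriv_log_fps: "fps_deriv (log_fps y) * (1 - fps_const y * fps_X) = fps_const y"
proof (rule fps_ext)
  fix n
  have deriv_nth: "fps_nth (fps_deriv (log_fps y)) n = y ^ Suc n" for n
    by (simp add: fps_deriv_nth log_fps_def del: of_nat_Suc)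
  show "fps_nth (fps_deriv (log_fps y) * (1 - fps_const y * fps_X)) n = fps_nth (fps_const y) n"
    by (cases n) (simp_all add: deriv_nth algebra_simps fps_X_mult_right_nth del: fps_deriv_nth)
qed

lemma q_fps_Suc: "q_fps (Suc k) x = q_fps k x * (1 - fps_const (x (Suc k)) * fps_X)"
  by (simp add: q_fps_def)

lemma q_fps_nth_0: "fps_nth (q_fps k x) 0 = 1"
  by (induction k) (simp_all add: q_fps_def q_fps_Suc[unfolded q_fps_def] algebra_simps)

lemma q_fps_nth_above_degree: "k < s \<Longrightarrow> fps_nth (q_fps k x) s = 0"
proof (induction k arbitrary: s)
  case 0
  then show ?case by (simp add: q_fps_def)
next
  case (Suc k)
  then show ?case
    by (simp add: q_fps_Suc algebra_simps fps_X_mult_right_nth)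
qed

text \<open>\<open>q_fps k x = \<Prod>\<^sub>i (1 - x\<^sub>i z)\<close> solves the equation \<open>Q' = - A' Q\<close> of \<open>exp(-A)\<close>, where \<open>A\<close> is the
  time series of \<open>\<Sum>\<^sub>i\<^sub>\<le>\<^sub>k [x\<^sub>i]\<close>.\<close>

lemma fps_deriv_q_fps:
  "fps_deriv (time_fps (bracket_sum k x)) * q_fps k x + fps_deriv (q_fps k x) = 0"
proof (induction k)
  case 0
  then show ?case by (simp add: q_fps_def time_fps_bracket_sum_0)
next
  case (Suc k)
  let ?A = "fps_deriv (time_fps (bracket_sum k x))" and ?Q = "q_fps k x"
    and ?L = "1 - fps_const (x (Suc k)) * fps_X"
  have "fps_deriv (time_fps (bracket_sum (Suc k) x)) * q_fps (Suc k) x + fps_deriv (q_fps (Suc k) x)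
      = (?A * ?Q + fps_deriv ?Q) * ?L + ?Q * (fps_deriv (log_fps (x (Suc k))) * ?L - fps_const (x (Suc k)))"
    by (simp add: time_fps_bracket_sum_Suc q_fps_Suc algebra_simps)
  also have "\<dots> = 0"
    using Suc.IH by (simp add: fps_deriv_log_fps)
  finally show ?case .
qed

lemma p_fps_bracket_sum_mult_q_fps: "p_fps (bracket_sum k x) * q_fps k x = 1"
proof -
  let ?E = "p_fps (bracket_sum k x)" and ?Q = "q_fps k x"
  have "fps_deriv (?E * ?Q) = ?E * (fps_deriv (time_fps (bracket_sum k x)) * ?Q + fps_deriv ?Q)"
    by (simp add: fps_deriv_p_fps algebra_simps)
  then have "fps_deriv (?E * ?Q) = 0"
    by (simp add: fps_deriv_q_fps)
  then have "?E * ?Q = fps_const (fps_nth (?E * ?Q) 0)"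
    using fps_deriv_eq_0_iff by blast
  also have "fps_nth (?E * ?Q) 0 = 1"
    using pfun_0[of "bracket_sum k x"] by (simp add: q_fps_nth_0 pfun_of_nat[symmetric])
  finally show ?thesis by simp
qed

lemma pfun_bracket_sum_convolution:
  "(\<Sum>s = 0..k. fps_nth (q_fps k x) s * pfun (m - int s) (bracket_sum k x)) = (if m = 0 then 1 else 0)"
proof (cases "m < 0")
  case False
  then obtain n where n: "m = int n" by (metis nonneg_int_cases not_le)
  let ?E = "p_fps (bracket_sum k x)" and ?Q = "q_fps k x"
  have "(\<Sum>s = 0..k. fps_nth ?Q s * pfun (m - int s) (bracket_sum k x))
      = (\<Sum>s = 0..max k n. fps_nth ?Q s * pfun (m - int s) (bracket_sum k x))"
    by (intro sum.mono_neutral_left) (auto simp: q_fps_nth_above_degree n)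
  also have "\<dots> = (\<Sum>s = 0..n. fps_nth ?Q s * pfun (m - int s) (bracket_sum k x))"
    by (intro sum.mono_neutral_right) (auto simp: q_fps_nth_above_degree n)
  also have "\<dots> = (\<Sum>s = 0..n. fps_nth ?Q s * fps_nth ?E (n - s))"
    by (intro sum.cong refl) (auto simp: n pfun_of_nat[symmetric] of_nat_diff)
  also have "\<dots> = fps_nth (?E * ?Q) n"
    unfolding fps_mult_nth
    by (rule sum.reindex_bij_witness[where i = "\<lambda>s. n - s" and j = "\<lambda>s. n - s"]) auto
  finally show ?thesis
    by (simp add: p_fps_bracket_sum_mult_q_fps n)
qed simp

text \<open>At \<open>t = \<Sum>\<^sub>i\<^sub>\<le>\<^sub>k [x\<^sub>i]\<close>, the columns \<open>j\<^sub>0 - k, \<dots>, j\<^sub>0\<close> weighted by the coefficients of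
  \<open>q_fps k x\<close> sum to the column of Kronecker deltas \<open>[R i + j\<^sub>0 = 0]\<close>.\<close>

lemma pdet_bracket_sum_eq_0:
  assumes "k \<le> j0" "j0 < g" and unhit: "\<forall>i<g. R i + int j0 \<noteq> 0"
  shows "pdet g R (bracket_sum k x) = 0"
proof -
  let ?t = "bracket_sum k x" and ?Q = "q_fps k x"
  define v where "v = Matrix.vec g (\<lambda>j. if j \<le> j0 \<and> j0 - j \<le> k then fps_nth ?Q (j0 - j) else 0)"
  have v: "v \<in> carrier_vec g" by (simp add: v_def)
  have "vec_index v j0 = 1" using assms by (simp add: v_def q_fps_nth_0)
  then have "v \<noteq> 0\<^sub>v g" using assms by auto
  moreover have "pmat g R ?t *\<^sub>v v = 0\<^sub>v g"
  proof (rule eq_vecI)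
    fix i assume "i < dim_vec (0\<^sub>v g :: real Matrix.vec)"
    then have i: "i < g" by simp
    have cols: "{j \<in> {0..<g}. j \<le> j0 \<and> j0 - j \<le> k} = (\<lambda>s. j0 - s) ` {0..k}"
    proof (intro equalityI subsetI)
      fix j assume "j \<in> {j \<in> {0..<g}. j \<le> j0 \<and> j0 - j \<le> k}"
      then show "j \<in> (\<lambda>s. j0 - s) ` {0..k}"
        by (intro image_eqI[where x = "j0 - j"]) auto
    qed (use assms in auto)
    have "vec_index (pmat g R ?t *\<^sub>v v) i
        = (\<Sum>j \<in> {0..<g}. if j \<le> j0 \<and> j0 - j \<le> k then pfun (R i + int j) ?t * fps_nth ?Q (j0 - j) else 0)"
      using i by (simp add: scalar_prod_def v_def index_mult_mat_vec if_distrib cong: if_cong)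
    also have "\<dots> = (\<Sum>j \<in> (\<lambda>s. j0 - s) ` {0..k}. pfun (R i + int j) ?t * fps_nth ?Q (j0 - j))"
      by (simp only: sum.inter_filter[OF finite_atLeastLessThan, symmetric] cols)
    also have "\<dots> = (\<Sum>s = 0..k. fps_nth ?Q s * pfun ((R i + int j0) - int s) ?t)"
      using assms by (subst sum.reindex) (auto simp: inj_on_def of_nat_diff algebra_simps intro!: sum.cong)
    also have "\<dots> = 0"
      using pfun_bracket_sum_convolution[of k x "R i + int j0"] unhit i by simp
    finally show "vec_index (pmat g R ?t *\<^sub>v v) i = vec_index (0\<^sub>v g) i"
      using i by simp
  qed simp
  ultimately show ?thesis
    unfolding pdet_def using det_0_iff_vec_prod_zero[OF pmat_carrier] v by blast
qed

text \<open>In the coordinates \<open>N i = R i + g - 1\<close>, row \<open>i\<close> contains \<open>p\<^sub>0\<close> in column \<open>j\<close> iff \<open>N i = g - 1 - j\<close>, so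
  the columns \<open>j \<ge> k\<close> correspond to the values \<open>0, \<dots>, g - k - 1\<close>.\<close>

lemma pdet_bracket_sum_nonzero_covers:
  assumes "pdet g R (bracket_sum k x) \<noteq> 0" and "k \<le> g"
  shows "{0..<int (g - k)} \<subseteq> (\<lambda>i. R i + int (g - 1)) ` {0..<g}"
proof
  fix c assume c: "c \<in> {0..<int (g - k)}"
  define j0 where "j0 = g - 1 - nat c"
  have j0: "k \<le> j0" "j0 < g" "int j0 = int (g - 1) - c"
    using c \<open>k \<le> g\<close> by (auto simp: j0_def)
  then obtain i where "i < g" "R i + int j0 = 0"
    using assms(1) pdet_bracket_sum_eq_0[of k j0 g] by blast
  then show "c \<in> (\<lambda>i. R i + int (g - 1)) ` {0..<g}"
    using j0(3) by (auto simp: image_iff intro!: bexI[where x = i])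
qed

section \<open>The surviving term\<close>

text \<open>Counting: \<open>g - k\<close> target values need \<open>g - k\<close> distinct rows, but only the \<open>\<le> m\<close> lowered rows and
  the \<open>g - k - m\<close> rows beyond \<open>k + m\<close> can supply them.\<close>

lemma lowered_rows_distinct:
  fixes N :: "nat \<Rightarrow> int" and as rs :: "nat list"
  defines "P \<equiv> lower_rows N as rs"
  assumes "k + m \<le> g" and rs: "rs \<in> row_lists m g"
    and high: "\<forall>i<k + m. int (g - k) \<le> N i"
    and inj: "inj_on P {0..<g}" and cover: "{0..<int (g - k)} \<subseteq> P ` {0..<g}"
  shows "distinct rs" and "set rs \<subseteq> {0..<k + m}" and "\<forall>i \<in> set rs. P i \<in> {0..<int (g - k)}"
proof -
  define T where "T = {0..<int (g - k)}"
  define X where "X = {k + m..<g}"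
  define hits where "hits = {i \<in> {0..<g}. P i \<in> T}"
  have len: "length rs = m" and rs_sub: "set rs \<subseteq> {0..<g}"
    using rs by (auto simp: row_lists_def)
  have hits_sub: "hits \<subseteq> set rs \<union> X"
  proof
    fix i assume i: "i \<in> hits"
    show "i \<in> set rs \<union> X"
    proof (rule ccontr)
      assume "i \<notin> set rs \<union> X"
      then have "P i = N i" "i < k + m"
        using i by (auto simp: P_def X_def hits_def lower_rows_notin)
      then show False using i high by (auto simp: hits_def T_def)
    qed
  qed
  have "T \<subseteq> P ` hits"
    using cover by (auto simp: T_def hits_def)
  then have "g - k \<le> card hits"
    using card_mono[of "P ` hits" T] card_image_le[of hits P] by (simp add: T_def hits_def)
  moreover have "card hits \<le> card (set rs \<union> X)"
    using hits_sub by (intro card_mono) (auto simp: X_def)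
  moreover have "card (set rs \<union> X) + card (set rs \<inter> X) = card (set rs) + card X"
    using card_Un_Int[of "set rs" X] by (simp add: X_def)
  moreover have "card (set rs) \<le> m"
    using card_length[of rs] len by simp
  moreover have "card X = g - k - m"
    by (simp add: X_def)
  ultimately have "card (set rs \<inter> X) = 0" and card_rs: "card (set rs) = m"
    and card_hits: "card hits = card (set rs \<union> X)"
    using \<open>k + m \<le> g\<close> by linarith+
  then have disj: "set rs \<inter> X = {}"
    by (simp add: X_def)
  show "distinct rs"
    using card_rs len by (simp add: card_distinct)
  show "set rs \<subseteq> {0..<k + m}"
  proof
    fix i assume "i \<in> set rs"
    then have "i < g" "i \<notin> X"
      using disj rs_sub by (auto simp: X_def)
    then show "i \<in> {0..<k + m}"
      by (auto simp: X_def)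
  qed
  have "hits = set rs \<union> X"
    using card_subset_eq[OF _ hits_sub] card_hits by (simp add: X_def)
  then show "\<forall>i \<in> set rs. P i \<in> {0..<int (g - k)}"
    by (auto simp: hits_def T_def)
qed

text \<open>Downward induction step: rows \<open>k + l'\<close> with \<open>l' > l\<close> already take the targets \<open>v l'\<close>, so row
  \<open>rs ! l\<close> lands on some \<open>v l'' \<le> v l\<close>; as \<open>N\<close> is decreasing this forces \<open>rs ! l \<ge> k + l\<close>.\<close>

lemma lowered_row_eq:
  fixes N v :: "nat \<Rightarrow> int" and as rs :: "nat list"
  defines "P \<equiv> lower_rows N as rs"
  assumes len: "length as = m" "length rs = m" and dist: "distinct rs"
    and rs_sub: "set rs \<subseteq> {0..<k + m}"
    and targets: "\<forall>l<m. P (rs ! l) \<in> v ` {0..<m}"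
    and N_dec: "strict_antimono_on {0..<k + m} N" and v_inc: "strict_mono_on {0..<m} v"
    and as_eq: "\<forall>l<m. int (as ! l) = N (k + l) - v l"
    and inj: "inj_on P {0..<k + m}"
    and "l < m" and above: "\<And>l'. l < l' \<Longrightarrow> l' < m \<Longrightarrow> rs ! l' = k + l'"
  shows "rs ! l = k + l"
proof -
  have P_rs: "P (rs ! l) = N (rs ! l) - int (as ! l)" if "l < m" for l
    unfolding P_def using dist len that by (intro lower_rows_nth) auto
  have rs_nth: "rs ! l < k + m" if "l < m" for l
  proof -
    have "rs ! l \<in> set rs" using that len by simp
    with rs_sub show ?thesis by auto
  qed
  obtain l'' where l'': "l'' < m" "P (rs ! l) = v l''"
    using targets \<open>l < m\<close> by auto
  have "l'' \<le> l"
  proof (rule ccontr)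
    assume "\<not> l'' \<le> l"
    then have "P (rs ! l'') = P (rs ! l)"
      using above[of l''] P_rs[of l''] as_eq l'' by simp
    moreover have "rs ! l'' \<in> {0..<k + m}" "rs ! l \<in> {0..<k + m}"
      using rs_nth l''(1) \<open>l < m\<close> by auto
    ultimately have "rs ! l'' = rs ! l"
      using inj by (simp add: inj_on_eq_iff)
    then show False
      using \<open>\<not> l'' \<le> l\<close> dist len l''(1) \<open>l < m\<close> by (simp add: nth_eq_iff_index_eq)
  qed
  then have "v l'' \<le> v l"
    using v_inc l''(1) \<open>l < m\<close> by (auto simp: strict_mono_on_less_eq)
  then have "N (rs ! l) \<le> N (k + l)"
    using P_rs[OF \<open>l < m\<close>] l''(2) as_eq \<open>l < m\<close> by simp
  moreover have "N (k + l) < N (rs ! l)" if "rs ! l < k + l"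
    using monotone_onD[OF N_dec, of "rs ! l" "k + l"] that \<open>l < m\<close> by simp
  ultimately have "k + l \<le> rs ! l"
    by (meson leD not_le)
  moreover have "rs ! l \<le> k + l"
  proof (rule ccontr)
    assume "\<not> rs ! l \<le> k + l"
    then have "rs ! (rs ! l - k) = rs ! l"
      using above[of "rs ! l - k"] rs_nth[OF \<open>l < m\<close>] by simp
    then show False
      using \<open>\<not> rs ! l \<le> k + l\<close> dist len rs_nth[OF \<open>l < m\<close>] \<open>l < m\<close>
      by (simp add: nth_eq_iff_index_eq)
  qed
  ultimately show ?thesis
    by simp
qed

lemma lowered_rows_eq_upt:
  fixes N v :: "nat \<Rightarrow> int" and as rs :: "nat list"
  defines "P \<equiv> lower_rows N as rs"
  assumes len: "length as = m" "length rs = m" and dist: "distinct rs"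
    and rs_sub: "set rs \<subseteq> {0..<k + m}"
    and targets: "\<forall>l<m. P (rs ! l) \<in> v ` {0..<m}"
    and N_dec: "strict_antimono_on {0..<k + m} N" and v_inc: "strict_mono_on {0..<m} v"
    and as_eq: "\<forall>l<m. int (as ! l) = N (k + l) - v l"
    and inj: "inj_on P {0..<k + m}"
  shows "rs = [k..<k + m]"
proof -
  have "\<forall>l'. n \<le> l' \<and> l' < m \<longrightarrow> rs ! l' = k + l'" if "n \<le> m" for n
    using that
  proof (induction n rule: inc_induct)
    case (step l)
    then have "rs ! l = k + l"
      using lowered_row_eq[OF len dist rs_sub targets[unfolded P_def] N_dec v_inc as_eq
          inj[unfolded P_def]] by simp
    with step.IH show ?case
      by (metis le_neq_implies_less Suc_leI)
  qed simp
  then show ?thesis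
    using len by (intro nth_equalityI) auto
qed

lemma pdet_lower_rows_bracket_sum_eq_0:
  fixes R v :: "nat \<Rightarrow> int" and as rs :: "nat list" and g :: nat
  defines "N \<equiv> \<lambda>i. R i + int (g - 1)"
  assumes km: "k + m \<le> g" and len: "length as = m" and rs: "rs \<in> row_lists m g"
    and high: "\<forall>i<k + m. int (g - k) \<le> N i"
    and N_dec: "strict_antimono_on {0..<k + m} N" and v_inc: "strict_mono_on {0..<m} v"
    and targets: "{0..<int (g - k)} \<subseteq> v ` {0..<m} \<union> N ` {k + m..<g}"
    and as_eq: "\<forall>l<m. int (as ! l) = N (k + l) - v l"
    and "rs \<noteq> [k..<k + m]"
  shows "pdet g (lower_rows R as rs) (bracket_sum k x) = 0"
proof (rule ccontr)
  assume nonzero: "pdet g (lower_rows R as rs) (bracket_sum k x) \<noteq> 0"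
  define P where "P = lower_rows N as rs"
  have P: "P = (\<lambda>i. lower_rows R as rs i + int (g - 1))"
    unfolding P_def N_def by (rule lower_rows_add_const)
  have inj: "inj_on P {0..<g}"
    using inj_on_rows_if_pdet_nonzero[OF nonzero] by (auto simp: P inj_on_def)
  have cover: "{0..<int (g - k)} \<subseteq> P ` {0..<g}"
    using pdet_bracket_sum_nonzero_covers[OF nonzero] km by (simp add: P)
  have dist: "distinct rs" and rs_sub: "set rs \<subseteq> {0..<k + m}"
    and rs_T: "\<forall>i \<in> set rs. P i \<in> {0..<int (g - k)}"
    using lowered_rows_distinct[OF km rs high inj[unfolded P_def] cover[unfolded P_def]]
    by (simp_all add: P_def)
  have len_rs: "length rs = m"
    using rs by (simp add: row_lists_def)
  have "P (rs ! l) \<in> v ` {0..<m}" if "l < m" for l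
  proof -
    have "rs ! l \<in> set rs" using that len_rs by simp
    then have in_T: "P (rs ! l) \<in> {0..<int (g - k)}" and "rs ! l < k + m"
      using rs_T rs_sub by auto
    have "P (rs ! l) \<noteq> N y" if y: "y \<in> {k + m..<g}" for y
    proof
      assume "P (rs ! l) = N y"
      moreover have "y \<notin> set rs" using y rs_sub by auto
      then have "P y = N y" by (simp add: P_def lower_rows_notin)
      moreover have "rs ! l \<in> {0..<g}" "y \<in> {0..<g}"
        using y \<open>rs ! l < k + m\<close> km by auto
      ultimately have "rs ! l = y"
        using inj_onD[OF inj] by metis
      then show False using y \<open>rs ! l < k + m\<close> by simp
    qed
    then show ?thesis
      using in_T targets by blast
  qed
  moreover have "inj_on P {0..<k + m}"
    using inj km by (auto intro: inj_on_subset)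
  ultimately have "rs = [k..<k + m]"
    using lowered_rows_eq_upt[OF len len_rs dist rs_sub _ N_dec v_inc as_eq]
    by (simp add: P_def)
  with \<open>rs \<noteq> [k..<k + m]\<close> show False ..
qed

theorem pderivs_pdet_bracket_sum:
  fixes R v :: "nat \<Rightarrow> int" and as :: "nat list" and g :: nat
  defines "N \<equiv> \<lambda>i. R i + int (g - 1)"
  assumes km: "k + m \<le> g" and len: "length as = m" and pos: "\<forall>a \<in> set as. 1 \<le> a"
    and high: "\<forall>i<k + m. int (g - k) \<le> N i"
    and N_dec: "strict_antimono_on {0..<k + m} N" and v_inc: "strict_mono_on {0..<m} v"
    and targets: "{0..<int (g - k)} \<subseteq> v ` {0..<m} \<union> N ` {k + m..<g}"
    and as_eq: "\<forall>l<m. int (as ! l) = N (k + l) - v l"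
  shows "pderivs as (pdet g R) (bracket_sum k x) = pdet g (lower_rows R as [k..<k + m]) (bracket_sum k x)"
proof -
  have upt: "[k..<k + m] \<in> row_lists m g"
    using km by (auto simp: row_lists_def)
  have "pderivs as (pdet g R) (bracket_sum k x)
      = (\<Sum>rs \<in> row_lists m g. pdet g (lower_rows R as rs) (bracket_sum k x))"
    using pderivs_pdet[OF pos] len by simp
  also have "\<dots> = pdet g (lower_rows R as [k..<k + m]) (bracket_sum k x)"
    using pdet_lower_rows_bracket_sum_eq_0[OF km len _ high[unfolded N_def] N_dec[unfolded N_def]
        v_inc targets[unfolded N_def] as_eq[unfolded N_def]]
    by (subst sum.remove[OF finite_row_lists upt]) (auto intro!: sum.neutral)
  finally show ?thesis .
qed

section \<open>Gap sequences\<close>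

lemma strict_antimono_on_join:
  fixes f :: "nat \<Rightarrow> 'a :: order"
  assumes "strict_antimono_on {0..k} f" and "strict_antimono_on {k..<n} f"
  shows "strict_antimono_on {0..<n} f"
proof (rule monotone_onI)
  fix i j assume ij: "i \<in> {0..<n}" "j \<in> {0..<n}" "i < j"
  consider "j \<le> k" | "k \<le> i" | "i < k" "k < j"
    by linarith
  then show "f j < f i"
  proof cases
    case 1
    with ij show ?thesis using monotone_onD[OF assms(1)] by auto
  next
    case 2
    with ij show ?thesis using monotone_onD[OF assms(2)] by auto
  next
    case 3
    with ij have "f j < f k" "f k < f i"
      using monotone_onD[OF assms(2), of k j] monotone_onD[OF assms(1), of i k] by auto
    then show ?thesis by (rule less_trans)
  qed
qed

lemma atLeastAtMost_card_if_downward_closed: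
  fixes S :: "nat set"
  assumes "finite S" "\<forall>i\<in>S. 1 \<le> i" "\<forall>i\<in>S. \<forall>i'. 1 \<le> i' \<longrightarrow> i' \<le> i \<longrightarrow> i' \<in> S"
  shows "S = {1..card S}"
proof (cases "S = {}")
  case False
  then have "Max S \<in> S"
    using assms(1) by simp
  moreover have "S \<subseteq> {1..Max S}"
    using assms(1,2) by (auto intro: Max_ge)
  moreover have "{1..Max S} \<subseteq> S"
    using assms(3) \<open>Max S \<in> S\<close> by auto
  ultimately have "S = {1..Max S}"
    by blast
  then show ?thesis
    by (metis card_atLeastAtMost diff_Suc_1)
qed simp

definition c_perm :: "nat set \<Rightarrow> nat \<Rightarrow> nat \<Rightarrow> nat \<Rightarrow> nat" where
  "c_perm G g k = (\<lambda>i. if i < g - k then g - k - 1 - c_seq G g k ! i else i)"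

lemma c_sign_eq_sign_c_perm: "c_sign G g k = sign (c_perm G g k)"
  by (simp add: c_sign_def c_perm_def)

locale gap_set =
  fixes G :: "nat set" and g :: nat
  assumes finite_gaps: "finite G" and card_gaps: "card G = g" and zero_not_gap: "0 \<notin> G"
begin

lemma gap_strict_mono: "1 \<le> i \<Longrightarrow> i < j \<Longrightarrow> j \<le> g \<Longrightarrow> gap G i < gap G j"
  unfolding gap_def using sorted_wrt_nth_less[OF strict_sorted_list_of_set, of "i - 1" "j - 1" G]
  by (simp add: card_gaps)

lemma gap_mono: "1 \<le> i \<Longrightarrow> i \<le> j \<Longrightarrow> j \<le> g \<Longrightarrow> gap G i \<le> gap G j"
  using gap_strict_mono[of i j] by (cases "i = j") auto

lemma gap_less_gap_iff: "1 \<le> i \<Longrightarrow> i \<le> g \<Longrightarrow> 1 \<le> j \<Longrightarrow> j \<le> g \<Longrightarrow> gap G i < gap G j \<longleftrightarrow> i < j"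
  by (metis gap_strict_mono less_asym nat_neq_iff)

lemma gap_in: "1 \<le> i \<Longrightarrow> i \<le> g \<Longrightarrow> gap G i \<in> G"
  unfolding gap_def using nth_mem[of "i - 1" "sorted_list_of_set G"] finite_gaps
  by (simp add: card_gaps)

lemma gap_surj: "c \<in> G \<Longrightarrow> \<exists>i. 1 \<le> i \<and> i \<le> g \<and> gap G i = c"
proof -
  assume "c \<in> G"
  then have "c \<in> set (sorted_list_of_set G)"
    using finite_gaps by simp
  then obtain p where "p < g" "sorted_list_of_set G ! p = c"
    by (metis card_gaps in_set_conv_nth length_sorted_list_of_set)
  then show ?thesis by (intro exI[of _ "Suc p"]) (simp add: gap_def)
qed

lemma gap_ge: "1 \<le> i \<Longrightarrow> i \<le> g \<Longrightarrow> i \<le> gap G i"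
proof (induction i rule: nat_induct_at_least)
  case base
  then show ?case using gap_in[of 1] zero_not_gap by (cases "gap G 1") auto
next
  case (Suc n)
  then show ?case using gap_strict_mono[of n "Suc n"] by simp
qed

lemma gap_diff_ge:
  assumes "1 \<le> i" "i \<le> j" "j \<le> g"
  shows "j - i \<le> gap G j - gap G i"
  using assms(2,3)
proof (induction j rule: dec_induct)
  case (step n)
  then show ?case using assms(1) gap_mono[of i n] gap_strict_mono[of n "Suc n"] by simp
qed simp

lemma infinite_nongaps: "infinite (- G)"
  using Diff_infinite_finite[OF finite_gaps infinite_UNIV_nat] by (simp add: Compl_eq_Diff_UNIV)

lemma nongap_strict_mono: "1 \<le> i \<Longrightarrow> i < j \<Longrightarrow> nongap G i < nongap G j"
  unfolding nongap_def using enumerate_mono[OF _ infinite_nongaps] by simp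

lemma nongap_not_gap: "nongap G j \<notin> G"
  unfolding nongap_def using enumerate_in_set[OF infinite_nongaps] by simp

lemma nongap_surj: "c \<notin> G \<Longrightarrow> \<exists>j. 1 \<le> j \<and> nongap G j = c"
proof -
  assume "c \<notin> G"
  then obtain n where "enumerate (- G) n = c"
    using enumerate_Ex[OF infinite_nongaps] by auto
  then show ?thesis by (intro exI[of _ "Suc n"]) (simp add: nongap_def)
qed

lemma nongap_1: "nongap G 1 = 0"
  unfolding nongap_def using zero_not_gap by (simp add: enumerate_0 Least_eq_0)

lemma nongap_ge: "1 \<le> j \<Longrightarrow> j - 1 \<le> nongap G j"
proof (induction j rule: nat_induct_at_least)
  case (Suc n)
  then show ?case using nongap_strict_mono[of n "Suc n"] by simp
qed simp

lemma nongaps_below_eq: "{j. 1 \<le> j \<and> nongap G j < g - k} = {1..m_k G g k}"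
proof -
  let ?S = "{j. 1 \<le> j \<and> nongap G j < g - k}"
  have "finite ?S"
    by (rule finite_subset[of _ "{..g - k}"]) (use nongap_ge in fastforce)+
  moreover have "j' \<in> ?S" if "j \<in> ?S" "1 \<le> j'" "j' \<le> j" for j j'
    using that nongap_strict_mono[of j' j] by (cases "j' = j") auto
  ultimately have "?S = {1..card ?S}"
    by (intro atLeastAtMost_card_if_downward_closed) auto
  then show ?thesis by (simp add: m_k_def)
qed

lemma nongap_less_iff: "1 \<le> j \<Longrightarrow> nongap G j < g - k \<longleftrightarrow> j \<le> m_k G g k"
  using nongaps_below_eq[of k] by (auto simp: set_eq_iff)

lemma m_k_pos: "k < g \<Longrightarrow> 1 \<le> m_k G g k"
  using nongap_less_iff[of 1 k] nongap_1 by simp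

lemma m_k_le: "m_k G g k \<le> g - k"
  using nongap_less_iff[of "m_k G g k" k] nongap_ge[of "m_k G g k"] by (cases "m_k G g k") auto

lemma below_eq_nongaps_gaps:
  "{0..<g - k} = nongap G ` {1..m_k G g k} \<union> {c \<in> G. c < g - k}"
proof (intro equalityI subsetI)
  fix c assume c: "c \<in> {0..<g - k}"
  show "c \<in> nongap G ` {1..m_k G g k} \<union> {c \<in> G. c < g - k}"
  proof (cases "c \<in> G")
    case False
    then obtain j where "1 \<le> j" "nongap G j = c" using nongap_surj by blast
    then show ?thesis using c nongap_less_iff[of j k] by auto
  qed (use c in auto)
qed (use nongap_less_iff[of _ k] in auto)

lemma gap_less_iff:
  assumes "1 \<le> i" "i \<le> g"
  shows "gap G i < g - k \<longleftrightarrow> i \<le> g - k - m_k G g k"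
proof -
  let ?I = "{i. 1 \<le> i \<and> i \<le> g \<and> gap G i < g - k}"
  have "inj_on (nongap G) {1..m_k G g k}"
    by (rule inj_onI) (metis atLeastAtMost_iff nat_neq_iff nongap_strict_mono)
  moreover have "{c \<in> G. c < g - k} = gap G ` ?I"
    using gap_surj by (auto intro: gap_in)
  moreover have "inj_on (gap G) ?I"
    by (rule inj_onI) (metis (no_types, lifting) gap_less_gap_iff mem_Collect_eq nat_neq_iff)
  moreover have "card {0..<g - k} = card (nongap G ` {1..m_k G g k}) + card {c \<in> G. c < g - k}"
    unfolding below_eq_nongaps_gaps[of k]
    by (rule card_Un_disjoint) (use nongap_not_gap finite_gaps in auto)
  ultimately have card_I: "card ?I = g - k - m_k G g k"
    by (simp add: card_image)
  have "finite ?I"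
    by (rule finite_subset[of _ "{..g}"]) auto
  moreover have "i' \<in> ?I" if "i \<in> ?I" "1 \<le> i'" "i' \<le> i" for i i'
    using that gap_mono[of i' i] by auto
  ultimately have "?I = {1..g - k - m_k G g k}"
    unfolding card_I[symmetric] by (intro atLeastAtMost_card_if_downward_closed) auto
  then have "i \<in> ?I \<longleftrightarrow> i \<in> {1..g - k - m_k G g k}"
    by simp
  with assms show ?thesis
    by simp
qed

lemma length_a_seq: "length (a_seq G g k) = m_k G g k"
  by (simp add: a_seq_def)

lemma a_seq_nth:
  assumes "l < m_k G g k"
  shows "a_seq G g k ! l = gap G (g - (k + l)) - nongap G (Suc l)"
proof -
  have "g - k - Suc l + 1 = g - (k + l)"
    using assms m_k_le[of k] by simp
  with assms show ?thesis
    by (simp add: a_seq_def del: upt_Suc)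
qed

lemma a_seq_bounds:
  assumes "l < m_k G g k"
  shows "nongap G (Suc l) < g - k" and "g - k \<le> gap G (g - (k + l))"
proof -
  show "nongap G (Suc l) < g - k"
    using assms nongap_less_iff[of "Suc l" k] by simp
  have "1 \<le> g - (k + l)" "g - (k + l) \<le> g" "\<not> g - (k + l) \<le> g - k - m_k G g k"
    using assms m_k_le[of k] by auto
  then show "g - k \<le> gap G (g - (k + l))"
    using gap_less_iff[of "g - (k + l)" k] by simp
qed

lemma int_a_seq_nth:
  assumes "l < m_k G g k"
  shows "int (a_seq G g k ! l) = int (gap G (g - (k + l))) - int (nongap G (Suc l))"
  using a_seq_nth[OF assms] a_seq_bounds[OF assms] by (simp add: of_nat_diff)

lemma a_seq_pos:
  assumes "a \<in> set (a_seq G g k)"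
  shows "1 \<le> a"
proof -
  obtain l where "l < m_k G g k" "a = a_seq G g k ! l"
    using assms by (auto simp: in_set_conv_nth length_a_seq)
  then show ?thesis
    using a_seq_nth a_seq_bounds by fastforce
qed

lemma below_subset_nongaps_gap_tail:
  assumes "k \<le> g"
  shows "{0..<int (g - k)} \<subseteq> (\<lambda>l. int (nongap G (Suc l))) ` {0..<m_k G g k}
           \<union> (\<lambda>i. int (gap G (g - i))) ` {k + m_k G g k..<g}"
proof
  fix c assume "c \<in> {0..<int (g - k)}"
  then obtain c' where c': "c = int c'" "c' < g - k"
    by (metis atLeastLessThan_iff nonneg_int_cases of_nat_less_iff)
  show "c \<in> (\<lambda>l. int (nongap G (Suc l))) ` {0..<m_k G g k} \<union> (\<lambda>i. int (gap G (g - i))) ` {k + m_k G g k..<g}"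
  proof (cases "c' \<in> G")
    case False
    then obtain j where "1 \<le> j" "nongap G j = c'"
      using nongap_surj by blast
    with c' nongap_less_iff[of j k] show ?thesis
      by (auto simp: image_iff intro!: bexI[where x = "j - 1"])
  next
    case True
    then obtain i where "1 \<le> i" "i \<le> g" "gap G i = c'"
      using gap_surj by blast
    with c' gap_less_iff[of i k] m_k_le[of k] assms show ?thesis
      by (auto simp: image_iff intro!: bexI[where x = "g - i"])
  qed
qed

lemma c_seq_nth_nongap: "p < m_k G g k \<Longrightarrow> c_seq G g k ! p = nongap G (Suc p)"
  by (simp add: c_seq_def nth_append del: upt_Suc)

lemma c_seq_nth_gap:
  assumes "m_k G g k \<le> p" "p < g - k"
  shows "c_seq G g k ! p = gap G (g - k - p)"
proof -
  define L where "L = g - k - m_k G g k"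
  have "c_seq G g k ! p = gap G (rev [1..<L + 1] ! (p - m_k G g k))"
    using assms by (simp add: c_seq_def nth_append L_def del: upt_Suc)
  also have "rev [1..<L + 1] ! (p - m_k G g k) = g - k - p"
    using assms by (simp add: rev_nth L_def del: upt_Suc)
  finally show ?thesis .
qed

lemma c_seq_less: "p < g - k \<Longrightarrow> c_seq G g k ! p < g - k"
  using c_seq_nth_nongap[of p k] nongap_less_iff[of "Suc p" k]
    c_seq_nth_gap[of k p] gap_less_iff[of "g - k - p" k]
  by (cases "p < m_k G g k") auto

lemma inj_on_c_seq: "inj_on (\<lambda>p. c_seq G g k ! p) {0..<g - k}"
proof (rule inj_onI)
  fix p q assume p: "p \<in> {0..<g - k}" and q: "q \<in> {0..<g - k}"
    and eq: "c_seq G g k ! p = c_seq G g k ! q"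
  have mixed: "c_seq G g k ! p \<noteq> c_seq G g k ! q"
    if "p < m_k G g k" "m_k G g k \<le> q" "q < g - k" for p q
  proof -
    have "gap G (g - k - q) \<in> G"
      using that by (intro gap_in) auto
    then show ?thesis
      using that nongap_not_gap[of "Suc p"] by (auto simp: c_seq_nth_nongap c_seq_nth_gap)
  qed
  consider "p < m_k G g k" "q < m_k G g k" | "m_k G g k \<le> p" "m_k G g k \<le> q"
    | "p < m_k G g k" "m_k G g k \<le> q" | "m_k G g k \<le> p" "q < m_k G g k"
    by linarith
  then show "p = q"
  proof cases
    case 1
    with eq have "nongap G (Suc p) = nongap G (Suc q)"
      by (simp add: c_seq_nth_nongap)
    then show ?thesis
      using nongap_strict_mono[of "Suc p" "Suc q"] nongap_strict_mono[of "Suc q" "Suc p"]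
      by (cases p q rule: linorder_cases) auto
  next
    case 2
    with eq p q have "gap G (g - k - p) = gap G (g - k - q)"
      by (simp add: c_seq_nth_gap)
    moreover have "1 \<le> g - k - p" "1 \<le> g - k - q" "g - k - p \<le> g" "g - k - q \<le> g"
      using p q by auto
    ultimately have "g - k - p = g - k - q"
      using gap_strict_mono[of "g - k - p" "g - k - q"] gap_strict_mono[of "g - k - q" "g - k - p"]
      by (cases "g - k - p" "g - k - q" rule: linorder_cases) auto
    with p q show ?thesis by simp
  next
    case 3
    with mixed eq q show ?thesis by auto
  next
    case 4
    with mixed[of q p] eq p show ?thesis by auto
  qed
qed

lemma c_perm_permutes: "c_perm G g k permutes {0..<g - k}"
proof (rule bij_imp_permutes)
  have "inj_on (c_perm G g k) {0..<g - k}"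
  proof (rule inj_onI)
    fix p q assume "p \<in> {0..<g - k}" "q \<in> {0..<g - k}" "c_perm G g k p = c_perm G g k q"
    with c_seq_less[of p k] c_seq_less[of q k] have "c_seq G g k ! p = c_seq G g k ! q"
      by (simp add: c_perm_def)
    with \<open>p \<in> _\<close> \<open>q \<in> _\<close> show "p = q"
      using inj_on_c_seq by (meson inj_on_eq_iff)
  qed
  moreover have "c_perm G g k ` {0..<g - k} \<subseteq> {0..<g - k}"
    by (auto simp: c_perm_def)
  ultimately show "bij_betw (c_perm G g k) {0..<g - k} {0..<g - k}"
    by (simp add: bij_betw_def endo_inj_surj)
qed (simp add: c_perm_def)

lemma gap_rows_strict_antimono:
  assumes "k < g"
    and head: "strict_antimono_on {0..k} N"
    and tail: "\<And>i. k \<le> i \<Longrightarrow> i < g \<Longrightarrow> N i = int (gap G (g - i))"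
  shows "strict_antimono_on {0..<k + m_k G g k} N"
proof -
  have "strict_antimono_on {k..<k + m_k G g k} N"
  proof (rule monotone_onI)
    fix i j assume "i \<in> {k..<k + m_k G g k}" "j \<in> {k..<k + m_k G g k}" "i < j"
    with m_k_le[of k] show "N j < N i"
      using gap_strict_mono[of "g - j" "g - i"] by (simp add: tail)
  qed
  with head show ?thesis
    by (rule strict_antimono_on_join)
qed

lemma gap_rows_ge:
  assumes "k < g"
    and head: "strict_antimono_on {0..k} N"
    and tail: "\<And>i. k \<le> i \<Longrightarrow> i < g \<Longrightarrow> N i = int (gap G (g - i))"
    and "i < k + m_k G g k"
  shows "int (g - k) \<le> N i"
proof -
  have tail_ge: "int (g - k) \<le> N i" if "k \<le> i" "i < k + m_k G g k" for i
  proof -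
    have "g - k \<le> gap G (g - i)"
      using that a_seq_bounds(2)[of "i - k" k] by simp
    then have "int (g - k) \<le> int (gap G (g - i))"
      by (simp only: of_nat_le_iff)
    with that m_k_le[of k] show ?thesis
      by (simp add: tail)
  qed
  show ?thesis
  proof (cases "k \<le> i")
    case False
    then have "N k < N i"
      using monotone_onD[OF head, of i k] by simp
    moreover have "int (g - k) \<le> N k"
      using tail_ge[of k] m_k_pos[OF \<open>k < g\<close>] by simp
    ultimately show ?thesis
      by simp
  qed (use tail_ge assms(4) in simp)
qed

lemma pderivs_a_seq_pdet:
  assumes "k < g"
    and head: "strict_antimono_on {0..k} R"
    and tail: "\<And>i. k \<le> i \<Longrightarrow> i < g \<Longrightarrow> R i = int (gap G (g - i)) - int (g - 1)"
  shows "pderivs (a_seq G g k) (pdet g R) (bracket_sum k x)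
       = pdet g (lower_rows R (a_seq G g k) [k..<k + m_k G g k]) (bracket_sum k x)"
proof -
  define m where "m = m_k G g k"
  define N where "N = (\<lambda>i. R i + int (g - 1))"
  define v where "v = (\<lambda>l. int (nongap G (Suc l)))"
  have N_tail: "N i = int (gap G (g - i))" if "k \<le> i" "i < g" for i
    using tail[OF that] by (simp add: N_def)
  have N_head: "strict_antimono_on {0..k} N"
    using monotone_onD[OF head] by (intro monotone_onI) (simp add: N_def)
  have km: "k + m \<le> g"
    using m_k_le[of k] \<open>k < g\<close> by (simp add: m_def)
  have as_eq: "\<forall>l<m. int (a_seq G g k ! l) = N (k + l) - v l"
  proof (intro allI impI)
    fix l assume "l < m"
    with km show "int (a_seq G g k ! l) = N (k + l) - v l"
      using int_a_seq_nth[of l k] N_tail[of "k + l"] by (simp add: m_def v_def)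
  qed
  have "N ` {k + m..<g} = (\<lambda>i. int (gap G (g - i))) ` {k + m..<g}"
    using N_tail by (intro image_cong) auto
  then have targets: "{0..<int (g - k)} \<subseteq> v ` {0..<m} \<union> N ` {k + m..<g}"
    using below_subset_nongaps_gap_tail[of k] \<open>k < g\<close> by (simp add: m_def v_def)
  have v_inc: "strict_mono_on {0..<m} v"
    by (intro strict_mono_onI) (simp add: v_def nongap_strict_mono)
  show ?thesis
    using pderivs_pdet_bracket_sum[OF km length_a_seq[of k, folded m_def] _
        _ _ v_inc targets[unfolded N_def] as_eq[unfolded N_def]]
      gap_rows_ge[OF \<open>k < g\<close> N_head N_tail, unfolded N_def]
      gap_rows_strict_antimono[OF \<open>k < g\<close> N_head N_tail, unfolded N_def] a_seq_pos
    by (simp add: m_def)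
qed

lemma lower_rows_a_seq:
  assumes "k \<le> i" "i < g"
    and tail: "\<And>i. k \<le> i \<Longrightarrow> i < g \<Longrightarrow> R i = int (gap G (g - i)) - int (g - 1)"
  shows "lower_rows R (a_seq G g k) [k..<k + m_k G g k] i = - int (k + c_perm G g k (i - k))"
proof (cases "i < k + m_k G g k")
  case True
  define l where "l = i - k"
  have l: "l < m_k G g k" "i = k + l"
    using True assms(1) by (auto simp: l_def)
  have "lower_rows R (a_seq G g k) [k..<k + m_k G g k] i = R i - int (a_seq G g k ! l)"
    using lower_rows_nth[of "[k..<k + m_k G g k]" "a_seq G g k" l R] l by (simp add: length_a_seq)
  also have "\<dots> = int (nongap G (Suc l)) - int (g - 1)"
    using tail[OF assms(1,2)] int_a_seq_nth[OF l(1)] l(2) by simp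
  also have "\<dots> = - int (k + c_perm G g k (i - k))"
    using a_seq_bounds(1)[OF l(1)] c_seq_nth_nongap[OF l(1)] l m_k_le[of k]
    by (simp add: c_perm_def of_nat_diff)
  finally show ?thesis .
next
  case False
  have gap_small: "gap G (g - i) < g - k"
    using False assms(2) gap_less_iff[of "g - i" k] by simp
  have "lower_rows R (a_seq G g k) [k..<k + m_k G g k] i = R i"
    using False by (simp add: lower_rows_notin)
  moreover have "c_seq G g k ! (i - k) = gap G (g - i)" "i - k < g - k"
    using c_seq_nth_gap[of k "i - k"] False assms by auto
  ultimately show ?thesis
    using tail[OF assms(1,2)] gap_small by (simp add: c_perm_def of_nat_diff)
qed

lemma gap_partition_nth:
  assumes "i < g"
  shows "int (gap_partition G g ! i) - int i = int (gap G (g - i)) - int (g - 1)"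
proof -
  have "g - i \<le> gap G (g - i)"
    using assms by (intro gap_ge) auto
  with assms show ?thesis
    by (simp add: gap_partition_def of_nat_diff)
qed

lemma gap_partition_decreasing:
  assumes "i \<le> j" "j < g"
  shows "gap_partition G g ! j \<le> gap_partition G g ! i"
proof -
  have "(g - i) - (g - j) \<le> gap G (g - i) - gap G (g - j)"
    using assms by (intro gap_diff_ge) auto
  moreover have "gap G (g - j) \<le> gap G (g - i)"
    using assms by (intro gap_mono) auto
  ultimately have "int j - int i \<le> int (gap G (g - i)) - int (gap G (g - j))"
    using assms by (simp add: of_nat_diff)
  then show ?thesis
    using gap_partition_nth[of i] gap_partition_nth[of j] assms by linarith
qed

theorem pderivs_a_seq_schur:
  assumes "k < g" and "length mu = g"
    and decreasing: "\<forall>i j. i \<le> j \<and> j < g \<longrightarrow> mu ! j \<le> mu ! i"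
    and agree: "\<forall>i. k \<le> i \<and> i < g \<longrightarrow> mu ! i = gap_partition G g ! i"
  shows "pderivs (a_seq G g k) (schur mu) (bracket_sum k x)
       = of_int (c_sign G g k) * schur (take k mu) (bracket_sum k x)"
proof -
  define R where "R = (\<lambda>i. int (mu ! i) - int i)"
  have tail: "R i = int (gap G (g - i)) - int (g - 1)" if "k \<le> i" "i < g" for i
    using agree gap_partition_nth[of i] that by (simp add: R_def)
  have head: "strict_antimono_on {0..k} R"
  proof (rule monotone_onI)
    fix i j assume "i \<in> {0..k}" "j \<in> {0..k}" "i < j"
    with \<open>k < g\<close> decreasing have "mu ! j \<le> mu ! i"
      by simp
    with \<open>i < j\<close> show "R j < R i"
      by (simp add: R_def)
  qed
  have lowered: "\<forall>i<g. lower_rows R (a_seq G g k) [k..<k + m_k G g k] i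
      = (if i < k then R i else - int (k + c_perm G g k (i - k)))"
    using lower_rows_a_seq[OF _ _ tail] by (simp add: lower_rows_notin)
  have "pderivs (a_seq G g k) (schur mu) (bracket_sum k x)
      = pdet g (lower_rows R (a_seq G g k) [k..<k + m_k G g k]) (bracket_sum k x)"
    using pderivs_a_seq_pdet[OF \<open>k < g\<close> head tail] schur_eq_pdet[OF \<open>length mu = g\<close>]
    by (simp add: R_def)
  also have "\<dots> = of_int (sign (c_perm G g k)) * pdet k R (bracket_sum k x)"
    using pdet_permuted_tail[OF _ c_perm_permutes lowered] \<open>k < g\<close> by simp
  also have "pdet k R (bracket_sum k x) = schur (take k mu) (bracket_sum k x)"
    using schur_eq_pdet[of "take k mu" k] assms(1,2) by (auto simp: R_def intro!: pdet_cong)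
  finally show ?thesis
    by (simp add: c_sign_eq_sign_c_perm)
qed

end

theorem theorem2p1:
  fixes G :: "nat set" and g k :: nat and x :: "nat \<Rightarrow> real"
  assumes "is_gap_sequence G g" and "k \<le> g"
  shows "pderivs (a_seq G g k) (schur (gap_partition G g)) (bracket_sum k x)
           = of_int (c_sign G g k) * schur (take k (gap_partition G g)) (bracket_sum k x)
         \<and> (\<forall>mu :: nat list. length mu = g \<longrightarrow> (\<forall>i j. i \<le> j \<and> j < g \<longrightarrow> mu ! j \<le> mu ! i) \<longrightarrow>
           (\<forall>i. k \<le> i \<and> i < g \<longrightarrow> mu ! i = gap_partition G g ! i) \<longrightarrow>
           pderivs (a_seq G g k) (schur mu) (bracket_sum k x)
           = of_int (c_sign G g k) * schur (take k mu) (bracket_sum k x))"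
proof (cases "k = g")
  case True
  then have "a_seq G g k = []" and "c_sign G g k = 1"
    by (simp_all add: a_seq_def m_k_def c_sign_def)
  with True show ?thesis
    by (simp add: pderivs_def gap_partition_def)
next
  case False
  interpret gap_set G g
    using assms(1) by unfold_locales (auto simp: is_gap_sequence_def)
  have "length (gap_partition G g) = g"
    by (simp add: gap_partition_def)
  with False assms(2) show ?thesis
    using pderivs_a_seq_schur[of k] gap_partition_decreasing by auto
qed

end
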